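(* Let $n\ge 2$ and $q=e^{2\pi i/6}$. The multiplicative group $G_n\subset Q_n^\times$ generated by $s_1,\dots,s_{n-1}$ is finite.
   Context: $Q_n$ is the $\mathbb{C}$-algebra with generators $u_1,v_1,\dots,u_{n-1},v_{n-1}$ and relations (G1) $u_i^2=v_i^2=-1$; (G2) $[u_i,v_j]=-1$ if $|i-j|\le1$ (including $i=j$); (G3) $[u_i,v_j]=1$ if $|i-j|\ge2$; (G4) $[u_i,u_j]=[v_i,v_j]=1$, with $[a,b]=aba^{-1}b^{-1}$. $s_i=\frac{-1}{2q}(1+u_i+v_i+u_iv_i)$ for $1\le i\le n-1$. *)

theory Defs
  imports Complex_Main
begin

text \<open>A complex algebra structure on a ring: a unital ring homomorphism from the
complex numbers into the centre of the ring (scalars act by multiplication by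
their image).\<close>
definition complex_alg_emb :: "(complex \<Rightarrow> 'a::ring_1) \<Rightarrow> bool" where
  "complex_alg_emb \<phi> \<longleftrightarrow>
     \<phi> 1 = 1 \<and> (\<forall>x y. \<phi> (x + y) = \<phi> x + \<phi> y) \<and> (\<forall>x y. \<phi> (x * y) = \<phi> x * \<phi> y)
     \<and> (\<forall>z a. \<phi> z * a = a * \<phi> z)"

text \<open>Since u_i^2 = v_i^2 = -1, every generator is a unit with inverse its negative, so
a commutator relation [a,b] = 1 means a*b = b*a and [a,b] = -1 means a*b = -(b*a).\<close>
definition Q_relations :: "nat \<Rightarrow> (nat \<Rightarrow> 'a::ring_1) \<Rightarrow> (nat \<Rightarrow> 'a) \<Rightarrow> bool" where
  "Q_relations n u v \<longleftrightarrow>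
     (\<forall>i\<in>{1..<n}. u i * u i = -1 \<and> v i * v i = -1) \<and>
     (\<forall>i\<in>{1..<n}. \<forall>j\<in>{1..<n}.
        (if (i \<le> j + 1 \<and> j \<le> i + 1) then u i * v j = - (v j * u i) else u i * v j = v j * u i)) \<and>
     (\<forall>i\<in>{1..<n}. \<forall>j\<in>{1..<n}. u i * u j = u j * u i \<and> v i * v j = v j * v i)"

definition s_elt :: "(complex \<Rightarrow> 'a::ring_1) \<Rightarrow> complex \<Rightarrow> (nat \<Rightarrow> 'a) \<Rightarrow> (nat \<Rightarrow> 'a) \<Rightarrow> nat \<Rightarrow> 'a" where
  "s_elt \<phi> q u v i = \<phi> (- 1 / (2 * q)) * (1 + u i + v i + u i * v i)"

inductive_set gen_group :: "'a::ring_1 set \<Rightarrow> 'a set" for S where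
  one: "1 \<in> gen_group S"
| mult: "g \<in> gen_group S \<Longrightarrow> s \<in> S \<Longrightarrow> s * g \<in> gen_group S"
| inv: "g \<in> gen_group S \<Longrightarrow> s \<in> S \<Longrightarrow> t * s = 1 \<Longrightarrow> s * t = 1 \<Longrightarrow> t * g \<in> gen_group S"

end

theory Submission
  imports Defs "HOL-Library.FuncSet"
begin

(* Let P be the finite set of signed monomials +-u_A v_B.  Each s_i is a unit with
   s_i^3 = -1, and a quaternion computation shows that s_i conjugates every signed monomial
   to a signed monomial.  Hence G permutes P by conjugation, and the centralizer Z of P in G
   has finite index.  Z commutes with all u_i, v_i, hence with all s_i, so Z is central in G.
   Expanding an element of Z in monomials and averaging over conjugation by the u_j, v_j
   shows that it is a combination of 1, u_X, v_X, u_X v_X for one fixed exponent set X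
   (the indices not divisible by 3, or the empty set).  So Z acts by scalars on four joint
   eigenvectors summing to 1.  Each resulting eigenvalue is a character of Z; composed with
   the transfer G -> Z and using s_i^6 = 1, it takes values in a fixed finite group of roots
   of unity.  Therefore Z is finite, and so is G. *)

section \<open>Groups of units, centralizers and the transfer\<close>

locale unit_group =
  fixes G :: "'a::monoid_mult set"
  assumes one_mem: "1 \<in> G"
    and mult_mem: "g \<in> G \<Longrightarrow> h \<in> G \<Longrightarrow> g * h \<in> G"
    and inverse_ex: "g \<in> G \<Longrightarrow> \<exists>h\<in>G. h * g = 1 \<and> g * h = 1"
begin

definition ginv :: "'a \<Rightarrow> 'a" where "ginv g = (THE h. h * g = 1 \<and> g * h = 1)"

lemma ginv: assumes g: "g \<in> G" shows "ginv g \<in> G" "ginv g * g = 1" "g * ginv g = 1"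
proof -
  obtain h where h: "h \<in> G" "h * g = 1" "g * h = 1" using inverse_ex[OF g] by blast
  have uniq: "h' = h" if "h' * g = 1" for h'
  proof -
    have "h' = h' * (g * h)" using h(3) by simp
    also have "\<dots> = h" using that by (simp add: mult.assoc[symmetric])
    finally show ?thesis .
  qed
  have "ginv g = h" unfolding ginv_def
    by (rule the_equality) (use h uniq in blast)+
  with h show "ginv g \<in> G" "ginv g * g = 1" "g * ginv g = 1" by auto
qed

definition subgroup :: "'a set \<Rightarrow> bool" where
  "subgroup Z \<longleftrightarrow> Z \<subseteq> G \<and> 1 \<in> Z \<and> (\<forall>z\<in>Z. \<forall>z'\<in>Z. z * z' \<in> Z) \<and> (\<forall>z\<in>Z. ginv z \<in> Z)"

definition coset :: "'a set \<Rightarrow> 'a \<Rightarrow> 'a set" where "coset Z g = (\<lambda>z. z * g) ` Z"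

lemma coset_eqI:
  assumes Z: "subgroup Z" and z: "z \<in> Z"
  shows "coset Z (z * g) = coset Z g"
proof
  show "coset Z (z * g) \<subseteq> coset Z g"
    using Z z unfolding coset_def subgroup_def by (auto simp: mult.assoc[symmetric])
  show "coset Z g \<subseteq> coset Z (z * g)"
  proof
    fix x assume "x \<in> coset Z g"
    then obtain z' where z': "z' \<in> Z" "x = z' * g" unfolding coset_def by auto
    have zG: "z \<in> G" using Z z unfolding subgroup_def by auto
    have "x = (z' * ginv z) * (z * g)" using z'(2) ginv(2)[OF zG] by (metis mult.assoc mult_1_left)
    moreover have "z' * ginv z \<in> Z" using Z z z'(1) unfolding subgroup_def by auto
    ultimately show "x \<in> coset Z (z * g)" unfolding coset_def by blast
  qed
qed

definition centralizer :: "'a set \<Rightarrow> 'a set" where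
  "centralizer P = {g \<in> G. \<forall>p\<in>P. g * p = p * g}"

lemma centralizer_commute: "z \<in> centralizer P \<Longrightarrow> p \<in> P \<Longrightarrow> z * p = p * z"
  by (simp add: centralizer_def)

lemma subgroup_centralizer: "subgroup (centralizer P)"
  unfolding subgroup_def
proof (intro conjI ballI)
  show "centralizer P \<subseteq> G" "1 \<in> centralizer P" by (auto simp: centralizer_def one_mem)
  fix z z' assume z: "z \<in> centralizer P" and z': "z' \<in> centralizer P"
  then show "z * z' \<in> centralizer P"
    unfolding centralizer_def by (auto intro: mult_mem) (metis mult.assoc)
next
  fix z assume z: "z \<in> centralizer P"
  then have zG: "z \<in> G" by (simp add: centralizer_def)
  have "ginv z * p = p * ginv z" if p: "p \<in> P" for p
  proof -
    have zp: "z * p = p * z" using z p by (simp add: centralizer_def)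
    have "ginv z * p = ginv z * p * (z * ginv z)" using ginv(3)[OF zG] by simp
    also have "\<dots> = ginv z * (z * p) * ginv z" by (simp add: mult.assoc zp)
    also have "\<dots> = p * ginv z" using ginv(2)[OF zG] by (simp add: mult.assoc[symmetric])
    finally show ?thesis .
  qed
  then show "ginv z \<in> centralizer P" using ginv(1)[OF zG] by (simp add: centralizer_def)
qed

text \<open>If every element of the group conjugates a finite set \<open>P\<close> into itself, the centralizer of
  \<open>P\<close> has finite index: the coset of \<open>g\<close> is determined by the permutation of \<open>P\<close> that
  conjugation by \<open>g\<close> induces.\<close>
lemma finite_index_centralizer:
  assumes P: "finite P" and conj: "\<And>g p. g \<in> G \<Longrightarrow> p \<in> P \<Longrightarrow> \<exists>y\<in>P. g * p = y * g"
  shows "finite (coset (centralizer P) ` G)"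
proof -
  let ?C = "centralizer P"
  define \<sigma> where "\<sigma> g = restrict (\<lambda>p. ginv g * p * g) P" for g
  have \<sigma>_PiE: "\<sigma> g \<in> P \<rightarrow>\<^sub>E P" if g: "g \<in> G" for g
  proof -
    have "ginv g * p * g \<in> P" if p: "p \<in> P" for p
    proof -
      obtain y where y: "y \<in> P" "ginv g * p = y * ginv g" using conj[OF ginv(1)[OF g] p] by blast
      have "ginv g * p * g = y" using y(2) ginv(2)[OF g] by (simp add: mult.assoc)
      with y(1) show ?thesis by simp
    qed
    then show ?thesis unfolding \<sigma>_def by auto
  qed
  have coset_\<sigma>: "coset ?C g = coset ?C h" if g: "g \<in> G" and h: "h \<in> G" and eq: "\<sigma> g = \<sigma> h" for g h
  proof -
    have "g * ginv h * p = p * (g * ginv h)" if p: "p \<in> P" for p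
    proof -
      have "ginv g * p * g = ginv h * p * h" using fun_cong[OF eq, of p] p by (simp add: \<sigma>_def)
      then have "g * (ginv g * p * g) * ginv h = g * (ginv h * p * h) * ginv h" by simp
      moreover have "g * (ginv g * p * g) * ginv h = p * (g * ginv h)"
        using ginv(3)[OF g] by (simp add: mult.assoc[symmetric])
      moreover have "g * (ginv h * p * h) * ginv h = g * ginv h * p"
        using ginv(3)[OF h] by (simp add: mult.assoc)
      ultimately show ?thesis by simp
    qed
    then have gh: "g * ginv h \<in> ?C" using mult_mem[OF g ginv(1)[OF h]] by (simp add: centralizer_def)
    have "g = (g * ginv h) * h" using ginv(2)[OF h] by (simp add: mult.assoc)
    then show ?thesis using coset_eqI[OF subgroup_centralizer gh, of h] by simp
  qed
  define rep where "rep f = coset ?C (SOME g. g \<in> G \<and> \<sigma> g = f)" for f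
  have "coset ?C ` G \<subseteq> rep ` (P \<rightarrow>\<^sub>E P)"
  proof
    fix X assume "X \<in> coset ?C ` G"
    then obtain g where g: "g \<in> G" "X = coset ?C g" by auto
    let ?g' = "SOME g'. g' \<in> G \<and> \<sigma> g' = \<sigma> g"
    have g': "?g' \<in> G \<and> \<sigma> ?g' = \<sigma> g" by (rule someI[of _ g]) (use g in auto)
    then have "X = rep (\<sigma> g)" using coset_\<sigma>[OF g(1), of ?g'] g(2) by (simp add: rep_def)
    then show "X \<in> rep ` (P \<rightarrow>\<^sub>E P)" using \<sigma>_PiE[OF g(1)] by blast
  qed
  moreover have "finite (P \<rightarrow>\<^sub>E P)" using P by (simp add: finite_PiE)
  ultimately show ?thesis by (meson finite_imageI finite_subset)
qed

end

text \<open>We fix a transversal \<open>reps\<close> of the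
  cosets and write every \<open>g\<close> uniquely as \<open>zpart g * rep g\<close>; this yields the transfer
  homomorphism into any commutative monoid carrying a character of \<open>Z\<close>.\<close>
locale central_subgroup = unit_group G for G :: "'a::monoid_mult set" +
  fixes Z :: "'a set"
  assumes subgroup_Z: "subgroup Z"
    and central: "z \<in> Z \<Longrightarrow> g \<in> G \<Longrightarrow> z * g = g * z"
    and finite_index: "finite (coset Z ` G)"
begin

lemma Z_G: "z \<in> Z \<Longrightarrow> z \<in> G"
  and one_Z: "1 \<in> Z"
  and mult_Z: "z \<in> Z \<Longrightarrow> z' \<in> Z \<Longrightarrow> z * z' \<in> Z"
  and ginv_Z: "z \<in> Z \<Longrightarrow> ginv z \<in> Z"
  using subgroup_Z unfolding subgroup_def by auto

definition rep :: "'a \<Rightarrow> 'a" where "rep g = (SOME r. r \<in> coset Z g)"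
definition reps :: "'a set" where "reps = rep ` G"
definition zpart :: "'a \<Rightarrow> 'a" where "zpart g = g * ginv (rep g)"

lemma rep_coset: "rep g \<in> coset Z g"
proof -
  have "g \<in> coset Z g" unfolding coset_def using one_Z by force
  then show ?thesis unfolding rep_def by (rule someI)
qed

lemma rep_G: "g \<in> G \<Longrightarrow> rep g \<in> G"
  using rep_coset[of g] Z_G mult_mem unfolding coset_def by auto

lemma reps_G: "r \<in> reps \<Longrightarrow> r \<in> G"
  unfolding reps_def using rep_G by auto

lemma rep_reps: "g \<in> G \<Longrightarrow> rep g \<in> reps"
  unfolding reps_def by blast

lemma finite_reps: "finite reps"
proof -
  have "reps = (\<lambda>C. SOME r. r \<in> C) ` (coset Z ` G)"
    unfolding reps_def rep_def by (auto simp: image_image)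
  then show ?thesis using finite_index by simp
qed

lemma card_reps_pos: "card reps > 0"
  using finite_reps one_mem rep_reps by (auto simp: card_gt_0_iff)

lemma coset_rep: "coset Z (rep g) = coset Z g"
proof -
  obtain z where "z \<in> Z" "rep g = z * g" using rep_coset unfolding coset_def by blast
  then show ?thesis using coset_eqI[OF subgroup_Z] by simp
qed

lemma rep_of_reps: "r \<in> reps \<Longrightarrow> rep r = r"
  unfolding reps_def rep_def using coset_rep unfolding rep_def by auto

lemma zpart_Z: assumes g: "g \<in> G" shows "zpart g \<in> Z"
proof -
  obtain z where z: "z \<in> Z" "rep g = z * g" using rep_coset unfolding coset_def by blast
  have zG: "z \<in> G" using z Z_G by auto
  have "zpart g = ginv z * (rep g * ginv (rep g))"
    unfolding zpart_def z(2) using ginv(2)[OF zG] by (simp add: mult.assoc[symmetric])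
  also have "\<dots> = ginv z" using ginv(3)[OF rep_G[OF g]] by simp
  finally show ?thesis using ginv_Z[OF z(1)] by simp
qed

lemma zpart_rep: "g \<in> G \<Longrightarrow> g = zpart g * rep g"
  unfolding zpart_def using ginv(2)[OF rep_G] by (simp add: mult.assoc)

lemma decomposition_unique:
  assumes z: "z \<in> Z" and r: "r \<in> reps"
  shows "rep (z * r) = r" "zpart (z * r) = z"
proof -
  have "coset Z (z * r) = coset Z r" using coset_eqI[OF subgroup_Z z] .
  then show rx: "rep (z * r) = r" using rep_of_reps[OF r] unfolding rep_def by simp
  show "zpart (z * r) = z"
    unfolding zpart_def rx using ginv(3)[OF reps_G[OF r]] by (simp add: mult.assoc)
qed

lemma zpart_of_reps: "r \<in> reps \<Longrightarrow> z \<in> Z \<Longrightarrow> zpart (r * z) = z"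
  using decomposition_unique(2) central reps_G by metis

lemma zpart_mult:
  assumes r: "r \<in> reps" and g: "g \<in> G" and h: "h \<in> G"
  shows "zpart (r * (g * h)) = zpart (r * g) * zpart (rep (r * g) * h)"
proof -
  have rg: "r * g \<in> G" using mult_mem[OF reps_G[OF r] g] .
  have r2: "rep (r * g) * h \<in> G" using mult_mem[OF rep_G[OF rg] h] .
  have "r * (g * h) = zpart (r * g) * (rep (r * g) * h)"
    using zpart_rep[OF rg] by (metis mult.assoc)
  also have "\<dots> = (zpart (r * g) * zpart (rep (r * g) * h)) * rep (rep (r * g) * h)"
    using zpart_rep[OF r2] by (metis mult.assoc)
  finally show ?thesis
    using decomposition_unique(2)[OF mult_Z[OF zpart_Z[OF rg] zpart_Z[OF r2]] rep_reps[OF r2]]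
    by simp
qed

lemma reps_permutation:
  assumes g: "g \<in> G" shows "bij_betw (\<lambda>r. rep (r * g)) reps reps"
proof -
  have maps: "(\<lambda>r. rep (r * g)) ` reps \<subseteq> reps" using rep_reps mult_mem reps_G g by auto
  have "inj_on (\<lambda>r. rep (r * g)) reps"
  proof
    fix r r' assume r: "r \<in> reps" and r': "r' \<in> reps" and eq: "rep (r * g) = rep (r' * g)"
    have rg: "r * g \<in> G" and r'g: "r' * g \<in> G" using mult_mem reps_G r r' g by auto
    let ?z = "zpart (r * g) * ginv (zpart (r' * g))"
    have z: "?z \<in> Z" using mult_Z[OF zpart_Z[OF rg] ginv_Z[OF zpart_Z[OF r'g]]] .
    have zr'G: "zpart (r' * g) \<in> G" using Z_G zpart_Z r'g by auto
    have "?z * (r' * g) = zpart (r * g) * (ginv (zpart (r' * g)) * zpart (r' * g)) * rep (r' * g)"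
      using zpart_rep[OF r'g] by (metis mult.assoc)
    also have "\<dots> = r * g" using zpart_rep[OF rg] eq ginv(2)[OF zr'G] by simp
    finally have "r = ?z * r'" using ginv(3)[OF g] by (metis mult.assoc mult_1_right)
    then show "r = r'" using decomposition_unique(1)[OF z r'] rep_of_reps[OF r] by simp
  qed
  then show ?thesis using maps finite_reps by (simp add: bij_betw_def endo_inj_surj)
qed

definition character :: "('a \<Rightarrow> 'b::comm_monoid_mult) \<Rightarrow> bool" where
  "character \<chi> \<longleftrightarrow> \<chi> 1 = 1 \<and> (\<forall>z\<in>Z. \<forall>z'\<in>Z. \<chi> (z * z') = \<chi> z * \<chi> z')"

definition transfer :: "('a \<Rightarrow> 'b::comm_monoid_mult) \<Rightarrow> 'a \<Rightarrow> 'b" where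
  "transfer \<chi> g = (\<Prod>r\<in>reps. \<chi> (zpart (r * g)))"

lemma transfer_mult:
  assumes \<chi>: "character \<chi>" and g: "g \<in> G" and h: "h \<in> G"
  shows "transfer \<chi> (g * h) = transfer \<chi> g * transfer \<chi> h"
proof -
  have "transfer \<chi> (g * h) = (\<Prod>r\<in>reps. \<chi> (zpart (r * g)) * \<chi> (zpart (rep (r * g) * h)))"
    unfolding transfer_def
  proof (rule prod.cong[OF refl])
    fix r assume r: "r \<in> reps"
    have rg: "r * g \<in> G" using mult_mem[OF reps_G[OF r] g] .
    have r2: "rep (r * g) * h \<in> G" using mult_mem[OF rep_G[OF rg] h] .
    show "\<chi> (zpart (r * (g * h))) = \<chi> (zpart (r * g)) * \<chi> (zpart (rep (r * g) * h))"
      using \<chi> zpart_Z[OF rg] zpart_Z[OF r2] unfolding zpart_mult[OF r g h] character_def by blast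
  qed
  also have "\<dots> = transfer \<chi> g * (\<Prod>r\<in>reps. \<chi> (zpart (rep (r * g) * h)))"
    unfolding transfer_def by (rule prod.distrib)
  also have "(\<Prod>r\<in>reps. \<chi> (zpart (rep (r * g) * h))) = transfer \<chi> h"
    unfolding transfer_def
    by (rule prod.reindex_bij_betw[OF reps_permutation[OF g], of "\<lambda>r. \<chi> (zpart (r * h))"])
  finally show ?thesis .
qed

lemma transfer_central: "z \<in> Z \<Longrightarrow> transfer \<chi> z = \<chi> z ^ card reps"
  unfolding transfer_def using zpart_of_reps by simp

lemma transfer_one: "character \<chi> \<Longrightarrow> transfer \<chi> 1 = 1"
  using transfer_central[OF one_Z, of \<chi>] by (simp add: character_def)

lemma transfer_power:
  assumes \<chi>: "character \<chi>" and g: "g \<in> G"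
  shows "transfer \<chi> (g ^ k) = transfer \<chi> g ^ k"
proof (induction k)
  case 0 then show ?case using transfer_one[OF \<chi>] by simp
next
  case (Suc k)
  have "g ^ k \<in> G" by (induction k) (simp_all add: one_mem mult_mem g)
  then show ?case using transfer_mult[OF \<chi> g] Suc by simp
qed

lemma finite_if_finite_Z: assumes "finite Z" shows "finite G"
proof -
  have "G \<subseteq> (\<lambda>(z, r). z * r) ` (Z \<times> reps)"
    using zpart_rep zpart_Z rep_reps by force
  then show ?thesis using assms finite_reps by (meson finite_SigmaI finite_imageI finite_subset)
qed

end

lemma gen_group_gen: "s \<in> S \<Longrightarrow> s \<in> gen_group S"
  using gen_group.mult[OF gen_group.one] by fastforce

lemma gen_group_inverse_gen: "s \<in> S \<Longrightarrow> t * s = 1 \<Longrightarrow> s * t = 1 \<Longrightarrow> t \<in> gen_group S"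
  using gen_group.inv[OF gen_group.one] by fastforce

lemma gen_group_mult: "g \<in> gen_group S \<Longrightarrow> h \<in> gen_group S \<Longrightarrow> g * h \<in> gen_group S"
proof (induction g rule: gen_group.induct)
  case one then show ?case by simp
next
  case (mult g s) then show ?case by (metis gen_group.mult mult.assoc)
next
  case (inv g s t) then show ?case by (metis gen_group.inv mult.assoc)
qed

lemma unit_group_gen_group:
  assumes units: "\<And>s. s \<in> S \<Longrightarrow> \<exists>t. t * s = 1 \<and> s * t = 1"
  shows "unit_group (gen_group S)"
proof
  fix g assume "g \<in> gen_group S"
  then show "\<exists>h\<in>gen_group S. h * g = 1 \<and> g * h = 1"
  proof (induction rule: gen_group.induct)
    case one then show ?case using gen_group.one by force
  next
    case (mult g s)
    obtain h where h: "h \<in> gen_group S" "h * g = 1" "g * h = 1" using mult.IH by blast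
    obtain t where t: "t * s = 1" "s * t = 1" using units[OF mult.hyps(2)] by blast
    have "h * t \<in> gen_group S" using gen_group_mult[OF h(1) gen_group_inverse_gen[OF mult.hyps(2) t]] .
    moreover have "(h * t) * (s * g) = 1" using h t by (metis mult.assoc mult_1_left)
    moreover have "(s * g) * (h * t) = 1" using h t by (metis mult.assoc mult_1_left)
    ultimately show ?case by blast
  next
    case (inv g s t)
    obtain h where h: "h \<in> gen_group S" "h * g = 1" "g * h = 1" using inv.IH by blast
    have "h * s \<in> gen_group S" using gen_group_mult[OF h(1) gen_group_gen[OF inv.hyps(2)]] .
    moreover have "(h * s) * (t * g) = 1" using h inv.hyps(3,4) by (metis mult.assoc mult_1_left)
    moreover have "(t * g) * (h * s) = 1" using h inv.hyps(3,4) by (metis mult.assoc mult_1_left)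
    ultimately show ?case by blast
  qed
qed (auto intro: gen_group.one gen_group_mult)

lemma gen_group_commute:
  assumes comm: "\<And>s. s \<in> S \<Longrightarrow> z * s = s * z"
  shows "g \<in> gen_group S \<Longrightarrow> z * g = g * z"
proof (induction rule: gen_group.induct)
  case one then show ?case by simp
next
  case (mult g s) then show ?case using comm by (metis mult.assoc)
next
  case (inv g s t)
  have "z * t = t * s * z * t" using inv.hyps(3) by simp
  also have "\<dots> = t * (z * s) * t" using comm[OF inv.hyps(2)] by (simp add: mult.assoc)
  also have "\<dots> = t * z" using inv.hyps(4) by (simp add: mult.assoc)
  finally show ?case using inv.IH by (metis mult.assoc)
qed

lemma gen_group_torsion:
  fixes f :: "'a::ring_1 \<Rightarrow> 'b::comm_monoid_mult"
  assumes hom: "\<And>g h. g \<in> gen_group S \<Longrightarrow> h \<in> gen_group S \<Longrightarrow> f (g * h) = f g * f h"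
    and one: "f 1 = 1" and gens: "\<And>s. s \<in> S \<Longrightarrow> f s ^ k = 1"
  shows "g \<in> gen_group S \<Longrightarrow> f g ^ k = 1"
proof (induction rule: gen_group.induct)
  case one then show ?case using \<open>f 1 = 1\<close> by simp
next
  case (mult g s)
  then show ?case using hom[OF gen_group_gen] gens by (simp add: power_mult_distrib)
next
  case (inv g s t)
  have tG: "t \<in> gen_group S" using gen_group_inverse_gen[OF inv.hyps(2-4)] .
  have "f t * f s = 1" using hom[OF tG gen_group_gen[OF inv.hyps(2)]] inv.hyps(3) one by simp
  then have "f t ^ k * f s ^ k = 1" by (metis power_mult_distrib power_one)
  then have "f t ^ k = 1" using gens[OF inv.hyps(2)] by simp
  then show ?case using hom[OF tG inv.hyps(1)] inv.IH by (simp add: power_mult_distrib)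
qed

locale complex_algebra =
  fixes \<phi> :: "complex \<Rightarrow> 'a::ring_1"
  assumes emb: "complex_alg_emb \<phi>"
begin

lemma phi_one [simp]: "\<phi> 1 = 1"
  and phi_add [simp]: "\<phi> (x + y) = \<phi> x + \<phi> y"
  and phi_mult [simp]: "\<phi> (x * y) = \<phi> x * \<phi> y"
  and phi_central: "\<phi> z * a = a * \<phi> z"
  using emb unfolding complex_alg_emb_def by blast+

lemma phi_zero [simp]: "\<phi> 0 = 0"
  using phi_add[of 0 0] by simp

lemma phi_neg [simp]: "\<phi> (- x) = - \<phi> x"
proof -
  have "\<phi> x + \<phi> (- x) = 0" using phi_add[of x "- x"] by simp
  then show ?thesis by (rule minus_unique[symmetric])
qed

lemma phi_diff [simp]: "\<phi> (x - y) = \<phi> x - \<phi> y"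
  by (simp only: diff_conv_add_uminus phi_add phi_neg)

lemma phi_of_nat [simp]: "\<phi> (of_nat k) = of_nat k"
  by (induction k) auto

lemma phi_numeral [simp]: "\<phi> (numeral k) = numeral k"
  using phi_of_nat[of "numeral k"] by simp

lemma phi_power: "\<phi> (x ^ k) = \<phi> x ^ k"
  by (induction k) simp_all

lemma phi_left: "x * (\<phi> c * y) = \<phi> c * (x * y)"
  by (metis mult.assoc phi_central)

lemma phi_inverse_cancel: "c \<noteq> 0 \<Longrightarrow> \<phi> (1 / c) * \<phi> c = 1"
  by (simp only: phi_mult[symmetric]) simp

lemma phi_cancel: assumes e: "e \<noteq> 0" and eq: "\<phi> c * e = \<phi> d * e" shows "c = d"
proof (rule ccontr)
  assume cd: "c \<noteq> d"
  have "\<phi> (c - d) * e = 0" using eq by (simp add: left_diff_distrib)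
  then have "(\<phi> (1 / (c - d)) * \<phi> (c - d)) * e = 0" by (simp add: mult.assoc)
  with cd e phi_inverse_cancel[of "c - d"] show False by simp
qed

definition joint_eigen :: "'a \<Rightarrow> 'a \<Rightarrow> complex \<times> complex \<Rightarrow> 'a" where
  "joint_eigen w1 w2 ab = \<phi> (1/4) * ((1 + \<phi> (fst ab) * w1) * (1 + \<phi> (snd ab) * w2))"

lemma joint_eigen_sum: "(\<Sum>ab\<in>{1,-1}\<times>{1,-1}. joint_eigen w1 w2 ab) = 1"
proof -
  have "{1,-1}\<times>{1,-1} = {(1::complex,1::complex),(1,-1),(-1,1),(-1,-1)}" by auto
  then have "(\<Sum>ab\<in>{1,-1}\<times>{1,-1}. joint_eigen w1 w2 ab) = \<phi> (1/4) + (\<phi> (1/4) + (\<phi> (1/4) + \<phi> (1/4)))"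
    by (simp add: joint_eigen_def algebra_simps)
  also have "\<dots> = \<phi> (1/4 + (1/4 + (1/4 + 1/4)))" by (simp only: phi_add)
  finally show ?thesis by simp
qed

lemma joint_eigen_eigen:
  assumes w1: "w1 * w1 = 1" and w2: "w2 * w2 = 1" and comm: "w1 * w2 = w2 * w1"
    and ab: "ab \<in> {1,-1}\<times>{1,-1}"
  shows "w1 * joint_eigen w1 w2 ab = \<phi> (fst ab) * joint_eigen w1 w2 ab"
    and "w2 * joint_eigen w1 w2 ab = \<phi> (snd ab) * joint_eigen w1 w2 ab"
proof -
  let ?a = "\<phi> (fst ab)" and ?b = "\<phi> (snd ab)"
  let ?X = "1 + ?a * w1" and ?Y = "1 + ?b * w2"
  have aa: "?a * ?a = 1" and bb: "?b * ?b = 1" using ab by (auto simp flip: phi_mult)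
  have wX: "w1 * ?X = ?a * ?X"
  proof -
    have "w1 * ?X = w1 + ?a * (w1 * w1)" by (simp add: distrib_left phi_left[of w1])
    also have "\<dots> = ?a * ?X" using w1 aa by (simp add: distrib_left mult.assoc[symmetric] add.commute)
    finally show ?thesis .
  qed
  have wY: "w2 * ?Y = ?b * ?Y"
  proof -
    have "w2 * ?Y = w2 + ?b * (w2 * w2)" by (simp add: distrib_left phi_left[of w2])
    also have "\<dots> = ?b * ?Y" using w2 bb by (simp add: distrib_left mult.assoc[symmetric] add.commute)
    finally show ?thesis .
  qed
  have w2X: "w2 * ?X = ?X * w2"
  proof -
    have "w2 * ?X = w2 + ?a * (w2 * w1)" by (simp add: distrib_left phi_left[of w2])
    also have "\<dots> = ?X * w2" by (simp add: distrib_right comm mult.assoc)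
    finally show ?thesis .
  qed
  have "w1 * (\<phi> (1/4) * (?X * ?Y)) = \<phi> (1/4) * ((w1 * ?X) * ?Y)"
    by (simp only: phi_left[of w1] mult.assoc)
  also have "\<dots> = ?a * (\<phi> (1/4) * (?X * ?Y))"
    by (simp only: wX mult.assoc phi_left[of "\<phi> (1/4)"])
  finally show "w1 * joint_eigen w1 w2 ab = ?a * joint_eigen w1 w2 ab"
    unfolding joint_eigen_def .
  have "w2 * (\<phi> (1/4) * (?X * ?Y)) = \<phi> (1/4) * ((w2 * ?X) * ?Y)"
    by (simp only: phi_left[of w2] mult.assoc)
  also have "\<dots> = \<phi> (1/4) * (?X * (w2 * ?Y))"
    by (simp only: w2X mult.assoc)
  also have "\<dots> = ?b * (\<phi> (1/4) * (?X * ?Y))"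
    by (simp only: wY phi_left[of ?X] phi_left[of "\<phi> (1/4)"])
  finally show "w2 * joint_eigen w1 w2 ab = ?b * joint_eigen w1 w2 ab"
    unfolding joint_eigen_def .
qed

lemma half_sum: "\<phi> (1/2) * (x + x) = x"
proof -
  have "\<phi> (1/2) * (x + x) = \<phi> (1/2 * 2) * x"
    by (simp only: phi_mult phi_numeral mult_2 mult.assoc)
  then show ?thesis by simp
qed

text \<open>Averaging over conjugation by an element \<open>y\<close> with \<open>y\<^sup>2 = -1\<close>: if \<open>z\<close> commutes with \<open>y\<close> and
  is a combination of terms each commuting or anticommuting with \<open>y\<close>, the anticommuting terms
  cancel from \<open>z = (z - y z y) / 2\<close>.\<close>
lemma commutant_filter:
  assumes yy: "y * y = -1" and J: "finite J" and zc: "z = (\<Sum>p\<in>J. \<phi> (c p) * m p)"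
    and zy: "z * y = y * z"
    and comm: "\<And>p. p \<in> J \<Longrightarrow> y * m p = (if P p then 1 else -1) * (m p * y)"
  shows "z = (\<Sum>p\<in>{p\<in>J. P p}. \<phi> (c p) * m p)"
proof -
  have "y * z * y = (y * y) * z" by (simp only: mult.assoc zy)
  then have yzy: "y * z * y = - z" using yy by simp
  have ymy: "y * m p * y = (if P p then - m p else m p)" if p: "p \<in> J" for p
  proof -
    have "y * m p * y = (if P p then 1 else -1) * (m p * (y * y))"
      by (subst comm[OF p]) (simp only: mult.assoc)
    then show ?thesis using yy by (cases "P p") simp_all
  qed
  have conj_term: "\<phi> (c p) * m p - y * (\<phi> (c p) * m p) * y
      = (if P p then \<phi> (c p) * m p + \<phi> (c p) * m p else 0)" if p: "p \<in> J" for p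
  proof -
    have "y * (\<phi> (c p) * m p) * y = \<phi> (c p) * (y * m p * y)"
      by (simp only: phi_left[of y] mult.assoc)
    then show ?thesis using ymy[OF p] by simp
  qed
  let ?S = "\<Sum>p\<in>{p\<in>J. P p}. \<phi> (c p) * m p"
  have "z + z = z - y * z * y" using yzy by simp
  also have "\<dots> = (\<Sum>p\<in>J. \<phi> (c p) * m p - y * (\<phi> (c p) * m p) * y)"
    unfolding zc by (simp only: sum_subtractf sum_distrib_left sum_distrib_right)
  also have "\<dots> = (\<Sum>p\<in>J. if P p then \<phi> (c p) * m p + \<phi> (c p) * m p else 0)"
    using conj_term by (rule sum.cong[OF refl])
  also have "\<dots> = ?S + ?S"
    by (simp only: sum.inter_filter[OF J, symmetric] sum.distrib)
  finally have zz: "z + z = ?S + ?S" .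
  have "z = \<phi> (1/2) * (z + z)" by (rule half_sum[symmetric])
  also have "\<dots> = ?S" unfolding zz by (rule half_sum)
  finally show ?thesis .
qed

lemma scalar_action_sum:
  assumes "finite F" and "\<And>p. p \<in> F \<Longrightarrow> \<exists>d. m p * e = \<phi> d * e"
  shows "\<exists>d. (\<Sum>p\<in>F. \<phi> (c p) * m p) * e = \<phi> d * e"
  using assms
proof (induction F rule: finite_induct)
  case empty then show ?case by (intro exI[of _ 0]) simp
next
  case (insert p F)
  obtain d where d: "(\<Sum>p\<in>F. \<phi> (c p) * m p) * e = \<phi> d * e" using insert by blast
  obtain d' where d': "m p * e = \<phi> d' * e" using insert.prems by blast
  have "(\<Sum>p\<in>insert p F. \<phi> (c p) * m p) * e = \<phi> (c p) * (m p * e) + (\<Sum>p\<in>F. \<phi> (c p) * m p) * e"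
    using insert.hyps by (simp add: distrib_right mult.assoc)
  also have "\<dots> = \<phi> (c p * d' + d) * e"
    by (simp only: d d' phi_add phi_mult distrib_right mult.assoc)
  finally show ?case by blast
qed

lemma rescaled_involution:
  assumes xx: "x * x = (-1) ^ k"
  shows "\<exists>l. l \<noteq> 0 \<and> \<phi> l * x * (\<phi> l * x) = 1"
proof -
  define l :: complex where "l = (if even k then 1 else \<i>)"
  have "\<phi> l * x * (\<phi> l * x) = \<phi> (l * l * (-1) ^ k)"
    using xx by (simp add: phi_left[of x] phi_power mult.assoc)
  also have "l * l * (-1) ^ k = 1" by (simp add: l_def minus_one_power_iff)
  finally show ?thesis by (intro exI[of _ l]) (simp add: l_def)
qed

lemma rescaled_eigen:
  assumes l: "l \<noteq> 0" and eig: "\<phi> l * x * e = \<phi> a * e"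
  shows "x * e = \<phi> (a / l) * e"
proof -
  have "x * e = \<phi> (1 / l) * (\<phi> l * x * e)"
    using phi_inverse_cancel[OF l] by (simp add: mult.assoc[symmetric])
  also have "\<dots> = \<phi> (a / l) * e"
    by (simp only: eig mult.assoc[symmetric] phi_mult[symmetric]) simp
  finally show ?thesis .
qed

text \<open>The scalar by which \<open>z\<close> acts on \<open>e\<close>, if it acts by a scalar at all.\<close>
definition eigenvalue :: "'a \<Rightarrow> 'a \<Rightarrow> complex" where
  "eigenvalue e z = (SOME c. z * e = \<phi> c * e)"

lemma eigenvalue: "\<exists>c. z * e = \<phi> c * e \<Longrightarrow> z * e = \<phi> (eigenvalue e z) * e"
  unfolding eigenvalue_def by (rule someI_ex)

lemma eigenvalue_mult:
  assumes e: "e \<noteq> 0" and z: "\<exists>c. z * e = \<phi> c * e" and z': "\<exists>c. z' * e = \<phi> c * e"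
  shows "eigenvalue e (z * z') = eigenvalue e z * eigenvalue e z'"
proof -
  have "z * z' * e = \<phi> (eigenvalue e z * eigenvalue e z') * e"
    using eigenvalue[OF z] eigenvalue[OF z']
    by (simp add: mult.assoc phi_left[of z] mult.commute[of "eigenvalue e z"])
  then have "\<exists>c. z * z' * e = \<phi> c * e" by blast
  from eigenvalue[OF this] \<open>z * z' * e = _\<close> show ?thesis by (intro phi_cancel[OF e]) simp
qed

lemma eigenvalue_one: assumes e: "e \<noteq> 0" shows "eigenvalue e 1 = 1"
proof -
  have "\<exists>c. 1 * e = \<phi> c * e" by (intro exI[of _ 1]) simp
  then have "\<phi> (eigenvalue e 1) * e = \<phi> 1 * e" using eigenvalue by simp
  then show ?thesis by (rule phi_cancel[OF e])
qed

end

definition commuting :: "('i \<Rightarrow> 'a::monoid_mult) \<Rightarrow> 'i set \<Rightarrow> bool" where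
  "commuting f S \<longleftrightarrow> (\<forall>i\<in>S. \<forall>j\<in>S. f i * f j = f j * f i)"

definition cprod :: "('i \<Rightarrow> 'a::monoid_mult) \<Rightarrow> 'i set \<Rightarrow> 'a" where
  "cprod f A = Finite_Set.fold (\<lambda>i x. f i * x) 1 A"

lemma cprod_empty [simp]: "cprod f {} = 1"
  by (simp add: cprod_def)

lemma cprod_insert:
  assumes "commuting f S" "finite A" "A \<subseteq> S" "i \<in> S" "i \<notin> A"
  shows "cprod f (insert i A) = f i * cprod f A"
proof -
  have "comp_fun_commute_on S (\<lambda>i x. f i * x)"
  proof
    fix i j assume "i \<in> S" "j \<in> S"
    then have "f i * f j = f j * f i" using assms(1) unfolding commuting_def by blast
    then show "(\<lambda>x. f i * x) \<circ> (\<lambda>x. f j * x) = (\<lambda>x. f j * x) \<circ> (\<lambda>x. f i * x)"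
      by (simp add: fun_eq_iff mult.assoc[symmetric])
  qed
  then show ?thesis
    unfolding cprod_def by (rule comp_fun_commute_on.fold_insert) (use assms in auto)
qed

lemma sign_left: "x * ((-1::'a::ring_1) ^ k * y) = (-1) ^ k * (x * y)"
  by (simp add: minus_one_power_iff)

lemma sign_mult: "(-1::'a::ring_1) ^ e * ((-1) ^ k * y) = (-1) ^ (k + e) * y"
  by (simp add: power_add[symmetric] mult.assoc[symmetric] add.commute)

lemma cprod_sign_commute:
  fixes f :: "'i \<Rightarrow> 'a::ring_1"
  assumes S: "commuting f S" and A: "finite A" "A \<subseteq> S"
    and sign: "\<And>b. b \<in> A \<Longrightarrow> y * f b = (if P b then - (f b * y) else f b * y)"
  shows "y * cprod f A = (-1) ^ card {b\<in>A. P b} * (cprod f A * y)"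
  using A sign
proof (induction A rule: finite_induct)
  case empty then show ?case by simp
next
  case (insert b B)
  have IH: "y * cprod f B = (-1) ^ card {b\<in>B. P b} * (cprod f B * y)" using insert by auto
  have yb: "y * f b = (-1) ^ (if P b then 1 else 0) * (f b * y)" using insert.prems by simp
  have card: "card {x\<in>insert b B. P x} = card {x\<in>B. P x} + (if P b then 1 else 0)"
  proof -
    have "{x\<in>insert b B. P x} = (if P b then insert b {x\<in>B. P x} else {x\<in>B. P x})" by auto
    then show ?thesis using insert.hyps by simp
  qed
  have bS: "b \<in> S" "B \<subseteq> S" using insert.prems(1) by auto
  have ins: "cprod f (insert b B) = f b * cprod f B"
    using cprod_insert[OF S insert.hyps(1) bS(2) bS(1) insert.hyps(2)] .
  let ?e = "if P b then 1 else 0 :: nat" and ?c = "card {b\<in>B. P b}"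
  have "y * cprod f (insert b B) = (y * f b) * cprod f B"
    by (simp only: ins mult.assoc)
  also have "\<dots> = (-1) ^ ?e * (f b * (y * cprod f B))"
    by (simp only: yb mult.assoc)
  also have "\<dots> = (-1) ^ ?e * ((-1) ^ ?c * (f b * (cprod f B * y)))"
    by (simp only: IH sign_left[of "f b"])
  also have "\<dots> = (-1) ^ (?c + ?e) * (cprod f (insert b B) * y)"
    by (simp only: ins mult.assoc sign_mult)
  also have "\<dots> = (-1) ^ card {x\<in>insert b B. P x} * (cprod f (insert b B) * y)"
    by (simp only: card)
  finally show ?case .
qed

lemma cprod_commute:
  fixes f :: "'i \<Rightarrow> 'a::ring_1"
  assumes "commuting f S" "finite A" "A \<subseteq> S" "\<And>b. b \<in> A \<Longrightarrow> y * f b = f b * y"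
  shows "y * cprod f A = cprod f A * y"
  using cprod_sign_commute[OF assms(1-3), of y "\<lambda>_. False"] assms(4) by simp

lemma cprod_square:
  fixes f :: "'i \<Rightarrow> 'a::ring_1"
  assumes S: "commuting f S" and A: "finite A" "A \<subseteq> S" and sq: "\<And>i. i \<in> A \<Longrightarrow> f i * f i = -1"
  shows "cprod f A * cprod f A = (-1) ^ card A"
  using A sq
proof (induction A rule: finite_induct)
  case empty then show ?case by simp
next
  case (insert a A)
  have c: "f a * cprod f A = cprod f A * f a"
    using insert S by (intro cprod_commute[OF S]) (auto simp: commuting_def)
  have "cprod f (insert a A) * cprod f (insert a A) = f a * (cprod f A * f a) * cprod f A"
    using insert S by (simp add: cprod_insert mult.assoc)
  also have "\<dots> = (f a * f a) * (cprod f A * cprod f A)"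
    by (simp only: c[symmetric] mult.assoc)
  finally have "cprod f (insert a A) * cprod f (insert a A) = (f a * f a) * (cprod f A * cprod f A)" .
  then show ?case using insert by simp
qed

lemma cprod_toggle:
  fixes f :: "'i \<Rightarrow> 'a::ring_1"
  assumes S: "commuting f S" and A: "finite A" "A \<subseteq> S" and i: "i \<in> S" and sq: "f i * f i = -1"
  shows "f i * cprod f A = (if i \<in> A then - cprod f (A - {i}) else cprod f (insert i A))"
proof (cases "i \<in> A")
  case True
  then have "cprod f A = f i * cprod f (A - {i})"
    using cprod_insert[OF S, of "A - {i}" i] A i by (auto simp: insert_absorb)
  then have "f i * cprod f A = (f i * f i) * cprod f (A - {i})" by (simp add: mult.assoc)
  then show ?thesis using True sq by simp
next
  case False then show ?thesis using cprod_insert[OF S A i] by simp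
qed

section \<open>The generators of \<open>Q\<^sub>n\<close> and their monomials\<close>

text \<open>\<open>u\<^sub>i\<close> and \<open>v\<^sub>j\<close> anticommute exactly when \<open>i, j\<close> are adjacent (\<open>|i - j| \<le> 1\<close>);
  \<open>adj_count A j\<close> counts the indices in \<open>A\<close> adjacent to \<open>j\<close>.\<close>
definition adjacent :: "nat \<Rightarrow> nat \<Rightarrow> bool" where
  "adjacent i j \<longleftrightarrow> i \<le> j + 1 \<and> j \<le> i + 1"

definition adj_count :: "nat set \<Rightarrow> nat \<Rightarrow> nat" where
  "adj_count A j = card {i\<in>A. adjacent i j}"

lemma adj_count_eq:
  assumes j: "j \<ge> 1"
  shows "adj_count A j = of_bool (j - 1 \<in> A) + of_bool (j \<in> A) + of_bool (j + 1 \<in> A)"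
proof -
  have "{i\<in>A. adjacent i j} = A \<inter> {j - 1, j, j + 1}" using j by (auto simp: adjacent_def)
  moreover have "card (A \<inter> {j - 1, j, j + 1}) = of_bool (j - 1 \<in> A) + of_bool (j \<in> A) + of_bool (j + 1 \<in> A)"
    using j by (cases "j - 1 \<in> A"; cases "j \<in> A"; cases "j + 1 \<in> A") (auto simp: Int_insert_right card_insert_if)
  ultimately show ?thesis unfolding adj_count_def by simp
qed

locale Q_generators =
  fixes n :: nat and u v :: "nat \<Rightarrow> 'a::ring_1"
  assumes rel: "Q_relations n u v"
begin

abbreviation Idx :: "nat set" where "Idx \<equiv> {1..<n}"

lemma u_square: "i \<in> Idx \<Longrightarrow> u i * u i = -1"
  and v_square: "i \<in> Idx \<Longrightarrow> v i * v i = -1"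
  and commuting_u: "commuting u Idx"
  and commuting_v: "commuting v Idx"
  using rel by (simp_all add: Q_relations_def commuting_def)

lemma v_u: "i \<in> Idx \<Longrightarrow> j \<in> Idx \<Longrightarrow> v j * u i = (if adjacent i j then - (u i * v j) else u i * v j)"
  using rel unfolding Q_relations_def adjacent_def by (auto split: if_splits)

lemma u_v: "i \<in> Idx \<Longrightarrow> j \<in> Idx \<Longrightarrow> u i * v j = (if adjacent i j then - (v j * u i) else v j * u i)"
  using rel unfolding Q_relations_def adjacent_def by (auto split: if_splits)

abbreviation Exps :: "(nat set \<times> nat set) set" where "Exps \<equiv> Pow Idx \<times> Pow Idx"

definition monomial :: "nat set \<times> nat set \<Rightarrow> 'a" where
  "monomial p = cprod u (fst p) * cprod v (snd p)"

lemma monomial_u: "i \<in> Idx \<Longrightarrow> monomial ({i}, {}) = u i"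
  and monomial_v: "i \<in> Idx \<Longrightarrow> monomial ({}, {i}) = v i"
  using cprod_insert[OF commuting_u, of "{}" i] cprod_insert[OF commuting_v, of "{}" i]
  by (simp_all add: monomial_def)

lemma u_cprod_v: "j \<in> Idx \<Longrightarrow> B \<subseteq> Idx \<Longrightarrow> u j * cprod v B = (-1) ^ adj_count B j * (cprod v B * u j)"
  unfolding adj_count_def
  by (rule cprod_sign_commute[OF commuting_v finite_subset]) (auto simp: u_v adjacent_def)

lemma v_cprod_u: "j \<in> Idx \<Longrightarrow> A \<subseteq> Idx \<Longrightarrow> v j * cprod u A = (-1) ^ adj_count A j * (cprod u A * v j)"
  unfolding adj_count_def
  by (rule cprod_sign_commute[OF commuting_u finite_subset]) (auto simp: v_u)

lemma u_monomial:
  assumes j: "j \<in> Idx" and p: "p \<in> Exps"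
  shows "u j * monomial p = (-1) ^ adj_count (snd p) j * (monomial p * u j)"
proof -
  have c: "u j * cprod u (fst p) = cprod u (fst p) * u j"
    using p j commuting_u by (intro cprod_commute[OF commuting_u]) (auto simp: commuting_def finite_subset)
  have "u j * monomial p = cprod u (fst p) * (u j * cprod v (snd p))"
    by (simp add: monomial_def c mult.assoc[symmetric])
  also have "\<dots> = (-1) ^ adj_count (snd p) j * (monomial p * u j)"
    using p by (simp only: u_cprod_v[OF j] sign_left monomial_def mult.assoc mem_Times_iff Pow_iff)
  finally show ?thesis .
qed

lemma v_monomial:
  assumes j: "j \<in> Idx" and p: "p \<in> Exps"
  shows "v j * monomial p = (-1) ^ adj_count (fst p) j * (monomial p * v j)"
proof -
  have c: "v j * cprod v (snd p) = cprod v (snd p) * v j"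
    using p j commuting_v by (intro cprod_commute[OF commuting_v]) (auto simp: commuting_def finite_subset)
  have "v j * monomial p = (v j * cprod u (fst p)) * cprod v (snd p)"
    by (simp add: monomial_def mult.assoc)
  also have "\<dots> = (-1) ^ adj_count (fst p) j * (monomial p * v j)"
    using p by (simp only: v_cprod_u[OF j] monomial_def mult.assoc c mem_Times_iff Pow_iff)
  finally show ?thesis .
qed

definition signed_monomials :: "'a set" where
  "signed_monomials = (\<lambda>(e, p). e * monomial p) ` ({1, -1} \<times> Exps)"

lemma finite_signed: "finite signed_monomials"
  unfolding signed_monomials_def by simp

lemma monomial_signed: "p \<in> Exps \<Longrightarrow> monomial p \<in> signed_monomials"
  unfolding signed_monomials_def by force

lemma signed_cases:
  assumes "x \<in> signed_monomials"
  obtains A B where "A \<subseteq> Idx" "B \<subseteq> Idx" "x = monomial (A, B) \<or> x = - monomial (A, B)"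
  using assms unfolding signed_monomials_def by auto

lemma signed_sign: "x \<in> signed_monomials \<Longrightarrow> - x \<in> signed_monomials"
  unfolding signed_monomials_def by (force simp: image_iff)

lemma signed_power_sign: "x \<in> signed_monomials \<Longrightarrow> (-1) ^ k * x \<in> signed_monomials"
  by (simp add: minus_one_power_iff signed_sign)

lemma u_signed: assumes i: "i \<in> Idx" and x: "x \<in> signed_monomials" shows "u i * x \<in> signed_monomials"
proof -
  obtain A B where AB: "A \<subseteq> Idx" "B \<subseteq> Idx" and x: "x = monomial (A, B) \<or> x = - monomial (A, B)"
    using x by (rule signed_cases)
  have "u i * monomial (A, B) = (if i \<in> A then - monomial (A - {i}, B) else monomial (insert i A, B))"
    using cprod_toggle[OF commuting_u finite_subset[OF AB(1)] AB(1) i u_square[OF i]]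
    by (simp add: monomial_def mult.assoc[symmetric])
  moreover have "(A - {i}, B) \<in> Exps" "(insert i A, B) \<in> Exps" using AB i by auto
  ultimately have "u i * monomial (A, B) \<in> signed_monomials"
    using monomial_signed[of "(A - {i}, B)"] monomial_signed[of "(insert i A, B)"] by (auto intro: signed_sign)
  then show ?thesis using x by (auto intro: signed_sign)
qed

lemma v_signed: assumes i: "i \<in> Idx" and x: "x \<in> signed_monomials" shows "v i * x \<in> signed_monomials"
proof -
  obtain A B where AB: "A \<subseteq> Idx" "B \<subseteq> Idx" and x: "x = monomial (A, B) \<or> x = - monomial (A, B)"
    using x by (rule signed_cases)
  have "v i * monomial (A, B) = (-1) ^ adj_count A i * (cprod u A * (v i * cprod v B))"
    using v_cprod_u[OF i AB(1)] by (simp add: monomial_def mult.assoc[symmetric])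
  also have "\<dots> = (-1) ^ adj_count A i * (if i \<in> B then - monomial (A, B - {i}) else monomial (A, insert i B))"
    using cprod_toggle[OF commuting_v finite_subset[OF AB(2)] AB(2) i v_square[OF i]]
    by (simp add: monomial_def)
  finally have "v i * monomial (A, B) = \<dots>" .
  moreover have "(A, B - {i}) \<in> Exps" "(A, insert i B) \<in> Exps" using AB i by auto
  ultimately have "v i * monomial (A, B) \<in> signed_monomials"
    by (auto intro!: signed_power_sign monomial_signed signed_sign)
  then show ?thesis using x by (auto intro: signed_sign)
qed

text \<open>Exponent sets \<open>A\<close> for which \<open>u\<^sub>A\<close> (and \<open>v\<^sub>A\<close>) commutes with every generator.\<close>
definition even_sets :: "nat set set" where
  "even_sets = {A. A \<subseteq> Idx \<and> (\<forall>j\<in>Idx. even (adj_count A j))}"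

lemma empty_even_set: "{} \<in> even_sets"
  by (simp add: even_sets_def adj_count_def)

text \<open>The parity condition at \<open>i - 1\<close> determines membership of \<open>i\<close> from that of \<open>i - 1\<close> and
  \<open>i - 2\<close>; starting from \<open>0 \<notin> A\<close> this forces \<open>A\<close> to be empty or the set of indices not
  divisible by 3.\<close>
lemma even_sets_cases:
  assumes A: "A \<in> even_sets"
  shows "A = {} \<or> A = {i\<in>Idx. i mod 3 \<noteq> 0}"
proof -
  have AI: "A \<subseteq> Idx" and ev: "\<And>j. j \<in> Idx \<Longrightarrow> even (adj_count A j)"
    using A unfolding even_sets_def by auto
  have recur: "i \<in> A \<longleftrightarrow> (i - 1 \<in> A) \<noteq> (i - 2 \<in> A)" if i: "2 \<le> i" "i < n" for i
  proof -
    have "even (adj_count A (i - 1))" using i by (intro ev) auto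
    moreover have "i - 1 - 1 = i - 2" "i - 1 + 1 = i" using i by auto
    ultimately show ?thesis using adj_count_eq[of "i - 1" A] i by auto
  qed
  have claim: "i < n \<Longrightarrow> (i \<in> A \<longleftrightarrow> 1 \<in> A \<and> i mod 3 \<noteq> 0)" for i
  proof (induction i rule: less_induct)
    case (less i)
    consider "i = 0" | "i = 1" | "i \<ge> 2" by linarith
    then show ?case
    proof cases
      case 1 then show ?thesis using AI by auto
    next
      case 2 then show ?thesis by simp
    next
      case 3
      have "(i mod 3 \<noteq> 0) \<longleftrightarrow> ((i - 1) mod 3 \<noteq> 0) \<noteq> ((i - 2) mod 3 \<noteq> 0)" using 3 by presburger
      then show ?thesis using recur[OF 3 less.prems] less.IH[of "i - 1"] less.IH[of "i - 2"] 3 less.prems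
        by auto
    qed
  qed
  show ?thesis
  proof (cases "1 \<in> A")
    case True then have "A = {i\<in>Idx. i mod 3 \<noteq> 0}" using claim AI by auto
    then show ?thesis by simp
  next
    case False then have "A = {}" using claim AI by force
    then show ?thesis by simp
  qed
qed

lemma even_sets_pair: "\<exists>X\<in>even_sets. even_sets \<subseteq> {{}, X}"
proof (cases "{i\<in>Idx. i mod 3 \<noteq> 0} \<in> even_sets")
  case True then show ?thesis using even_sets_cases by blast
next
  case False then show ?thesis using even_sets_cases empty_even_set by blast
qed

end

section \<open>Quaternion identities\<close>

lemma quaternion_square:
  fixes a b :: "'a::ring_1"
  assumes aa: "a * a = -1" and bb: "b * b = -1" and ab: "b * a = - (a * b)"
  shows "(1 + a + b + a * b) * (1 + a + b + a * b) = (1 + a + b + a * b) + (1 + a + b + a * b) - 4"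
proof -
  have aa': "a * (a * y) = - y" for y using aa by (metis mult.assoc mult_minus1)
  have bb': "b * (b * y) = - y" for y using bb by (metis mult.assoc mult_minus1)
  have ab': "b * (a * y) = - (a * (b * y))" for y using ab by (metis mult.assoc mult_minus_left)
  have "(1 + a + b + a * b) * (1 + a + b + a * b) + 4 = (1 + a + b + a * b) + (1 + a + b + a * b)"
    by (simp add: algebra_simps aa aa' bb bb' ab ab')
  then show ?thesis by (simp add: algebra_simps)
qed

lemma cube_of_quadratic:
  fixes x :: "'a::ring_1"
  assumes h: "x * x = x + x - 4"
  shows "x * (x * x) = - 8"
proof -
  have x4: "x * 4 = x + x + x + x"
    by (simp only: numeral_Bit0 numeral_One distrib_left mult_1_right add.assoc)
  have "x * (x * x) = x * x + x * x - x * 4" by (simp add: h algebra_simps)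
  also have "\<dots> = -8" by (simp add: h x4 algebra_simps)
  finally show ?thesis .
qed

lemma quaternion_conjugation:
  fixes a b m :: "'a::ring_1"
  assumes aa: "a * a = -1" and bb: "b * b = -1" and ab: "b * a = - (a * b)"
    and am: "a * m = (if pa then 1 else -1) * (m * a)"
    and bm: "b * m = (if pb then 1 else -1) * (m * b)"
  shows "\<exists>c\<in>{1, a, b, a * b}. (1 + a + b + a * b) * m = c * m * (1 + a + b + a * b)"
proof -
  have aa': "a * (a * y) = - y" for y using aa by (metis mult.assoc mult_minus1)
  have bb': "b * (b * y) = - y" for y using bb by (metis mult.assoc mult_minus1)
  have ab': "b * (a * y) = - (a * (b * y))" for y using ab by (metis mult.assoc mult_minus_left)
  have am': "a * (m * y) = (if pa then 1 else -1) * (m * (a * y))" for y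
    using am by (metis mult.assoc)
  have bm': "b * (m * y) = (if pb then 1 else -1) * (m * (b * y))" for y
    using bm by (metis mult.assoc)
  let ?c = "if pa \<and> pb then 1 else if \<not> pa \<and> pb then a else if pa \<and> \<not> pb then a * b else b"
  have "(1 + a + b + a * b) * m = ?c * m * (1 + a + b + a * b)"
    by (cases pa; cases pb; simp add: algebra_simps aa aa' bb bb' ab ab' am am' bm bm')
  then show ?thesis by (auto split: if_splits)
qed

section \<open>The elements \<open>s\<^sub>i\<close> and the group they generate\<close>

text \<open>The setting of the theorem: generators satisfying (G1)-(G4) in a complex algebra, and a
  primitive sixth root of unity \<open>q\<close>, of which only \<open>q\<^sup>3 = -1\<close> is used.\<close>
locale Q_algebra = complex_algebra \<phi> + Q_generators n u v
  for \<phi> :: "complex \<Rightarrow> 'a::ring_1" and n and u v :: "nat \<Rightarrow> 'a" +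
  fixes q :: complex
  assumes q_cube: "q ^ 3 = -1"
begin

definition s :: "nat \<Rightarrow> 'a" where "s i = s_elt \<phi> q u v i"

abbreviation quat :: "nat \<Rightarrow> 'a" where "quat i \<equiv> 1 + u i + v i + u i * v i"

lemma s_quat: "s i = \<phi> (- 1 / (2 * q)) * quat i"
  by (simp add: s_def s_elt_def)

text \<open>\<open>s\<^sub>i\<^sup>3 = -1\<close>, from \<open>w\<^sup>3 = -8\<close> for \<open>w = 1 + u\<^sub>i + v\<^sub>i + u\<^sub>i v\<^sub>i\<close> and \<open>(-1/(2q))\<^sup>3 = 1/8\<close>.\<close>
lemma s_cube: assumes i: "i \<in> Idx" shows "s i * (s i * s i) = -1"
proof -
  define \<alpha> where "\<alpha> = - 1 / (2 * q)"
  have vu: "v i * u i = - (u i * v i)" using v_u[OF i i] by (simp add: adjacent_def)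
  have "\<alpha> ^ 3 = (-1) ^ 3 / (2 ^ 3 * q ^ 3)" unfolding \<alpha>_def by (simp add: power_divide power_mult_distrib)
  then have \<alpha>3: "\<alpha> ^ 3 * 8 = 1" using q_cube by simp
  have "s i * (s i * s i) = \<phi> (\<alpha> ^ 3) * (quat i * (quat i * quat i))"
    unfolding s_quat \<alpha>_def[symmetric]
    by (simp only: phi_left[of "quat i"] phi_power power3_eq_cube phi_mult mult.assoc)
  also have "\<dots> = - \<phi> (\<alpha> ^ 3 * 8)"
    using cube_of_quadratic[OF quaternion_square[OF u_square[OF i] v_square[OF i] vu]] by simp
  finally show ?thesis unfolding \<alpha>3 by simp
qed

lemma s_unit: "i \<in> Idx \<Longrightarrow> (- (s i * s i)) * s i = 1" "i \<in> Idx \<Longrightarrow> s i * (- (s i * s i)) = 1"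
  using s_cube by (simp_all add: mult.assoc)

lemma s_inverse_unique: assumes i: "i \<in> Idx" and t: "t * s i = 1" shows "t = - (s i * s i)"
proof -
  have "t = t * (s i * (- (s i * s i)))" by (simp only: s_unit(2)[OF i] mult_1_right)
  also have "\<dots> = - (s i * s i)" by (simp only: mult.assoc[symmetric] t mult_1_left)
  finally show ?thesis .
qed

lemma s_normalizes:
  assumes i: "i \<in> Idx" and x: "x \<in> signed_monomials" shows "\<exists>y\<in>signed_monomials. s i * x = y * s i"
proof -
  obtain A B where AB: "(A, B) \<in> Exps" and x: "x = monomial (A, B) \<or> x = - monomial (A, B)"
    using x by (rule signed_cases) auto
  have vu: "v i * u i = - (u i * v i)" using v_u[OF i i] by (simp add: adjacent_def)
  have am: "u i * monomial (A, B) = (if even (adj_count B i) then 1 else -1) * (monomial (A, B) * u i)"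
    using u_monomial[OF i AB] by (simp add: minus_one_power_iff)
  have bm: "v i * monomial (A, B) = (if even (adj_count A i) then 1 else -1) * (monomial (A, B) * v i)"
    using v_monomial[OF i AB] by (simp add: minus_one_power_iff)
  obtain c where c: "c \<in> {1, u i, v i, u i * v i}" and wm: "quat i * monomial (A, B) = c * monomial (A, B) * quat i"
    using quaternion_conjugation[OF u_square[OF i] v_square[OF i] vu am bm] by blast
  have "s i * monomial (A, B) = \<phi> (- 1 / (2 * q)) * (c * monomial (A, B) * quat i)"
    unfolding s_quat by (simp only: mult.assoc wm)
  also have "\<dots> = (c * monomial (A, B)) * s i"
    unfolding s_quat by (simp only: phi_left mult.assoc)
  finally have sm: "s i * monomial (A, B) = (c * monomial (A, B)) * s i" .
  have cm: "c * monomial (A, B) \<in> signed_monomials"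
    using c monomial_signed[OF AB] u_signed[OF i] v_signed[OF i] by (auto simp: mult.assoc)
  show ?thesis
  proof (cases "x = monomial (A, B)")
    case True then show ?thesis using sm cm by blast
  next
    case False
    then have "s i * x = (- (c * monomial (A, B))) * s i" using x sm by simp
    then show ?thesis using signed_sign[OF cm] by blast
  qed
qed

abbreviation G :: "'a set" where "G \<equiv> gen_group (s ` Idx)"

lemma unit_group_G: "unit_group G"
  using s_unit by (intro unit_group_gen_group) blast

lemma G_normalizes: "g \<in> G \<Longrightarrow> x \<in> signed_monomials \<Longrightarrow> \<exists>y\<in>signed_monomials. g * x = y * g"
proof (induction arbitrary: x rule: gen_group.induct)
  case one then show ?case by auto
next
  case (mult g s')
  obtain i where i: "i \<in> Idx" "s' = s i" using mult.hyps(2) by blast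
  obtain y where y: "y \<in> signed_monomials" "g * x = y * g" using mult.IH[OF mult.prems] by blast
  obtain y' where y': "y' \<in> signed_monomials" "s i * y = y' * s i" using s_normalizes[OF i(1) y(1)] by blast
  have "s' * g * x = y' * (s' * g)" by (simp add: i(2) mult.assoc y(2)) (simp add: y'(2) mult.assoc[symmetric])
  then show ?case using y'(1) by blast
next
  case (inv g s' t)
  obtain i where i: "i \<in> Idx" "s' = s i" using inv.hyps(2) by blast
  have t: "t = - (s i * s i)" using s_inverse_unique[OF i(1)] inv.hyps(3) i(2) by simp
  obtain y where y: "y \<in> signed_monomials" "g * x = y * g" using inv.IH[OF inv.prems] by blast
  obtain y1 where y1: "y1 \<in> signed_monomials" "s i * y = y1 * s i" using s_normalizes[OF i(1) y(1)] by blast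
  obtain y2 where y2: "y2 \<in> signed_monomials" "s i * y1 = y2 * s i" using s_normalizes[OF i(1) y1(1)] by blast
  have "t * y = y2 * t" unfolding t by (simp add: mult.assoc y1(2)) (simp add: y2(2) mult.assoc[symmetric])
  then have "t * g * x = y2 * (t * g)" by (simp add: mult.assoc y(2)) (simp add: mult.assoc[symmetric])
  then show ?case using y2(1) by blast
qed

text \<open>It commutes with all \<open>u\<^sub>i, v\<^sub>i\<close>,
  hence with all \<open>s\<^sub>i\<close>, so it is a central subgroup of \<open>G\<close>; it has finite index because \<open>G\<close>
  permutes the finite set of signed monomials by conjugation.\<close>
abbreviation Z :: "'a set" where "Z \<equiv> unit_group.centralizer G signed_monomials"

lemma Z_commutes_generators:
  assumes z: "z \<in> Z" and i: "i \<in> Idx"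
  shows "z * u i = u i * z" "z * v i = v i * z"
proof -
  have "\<forall>p\<in>signed_monomials. z * p = p * z" using unit_group.centralizer_commute[OF unit_group_G z] by blast
  then show "z * u i = u i * z" "z * v i = v i * z"
    using monomial_signed[of "({i}, {})"] monomial_signed[of "({}, {i})"] i by (auto simp: monomial_u monomial_v)
qed

lemma Z_commutes_s: assumes z: "z \<in> Z" and i: "i \<in> Idx" shows "z * s i = s i * z"
proof -
  note zu = Z_commutes_generators(1)[OF z i] and zv = Z_commutes_generators(2)[OF z i]
  have "z * (u i * v i) = u i * v i * z" by (simp only: mult.assoc[symmetric] zu) (simp only: mult.assoc zv)
  then have "z * quat i = quat i * z" by (simp add: distrib_left distrib_right zu zv)
  then show ?thesis unfolding s_quat by (simp only: phi_left mult.assoc)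
qed

lemma central_subgroup_Z: "central_subgroup G Z"
proof -
  interpret unit_group G by (rule unit_group_G)
  show ?thesis
  proof
    show "subgroup Z" by (rule subgroup_centralizer)
    show "z * g = g * z" if "z \<in> Z" "g \<in> G" for z g
      using gen_group_commute[OF _ that(2)] Z_commutes_s[OF that(1)] by blast
    show "finite (coset Z ` G)"
      using finite_index_centralizer[OF finite_signed] G_normalizes by blast
  qed
qed

sublocale central_subgroup G Z
  by (rule central_subgroup_Z)

section \<open>Expansion in monomials\<close>

definition monomial_span :: "'a set" where
  "monomial_span = {x. \<exists>c. x = (\<Sum>p\<in>Exps. \<phi> (c p) * monomial p)}"

lemma spanI: "x = (\<Sum>p\<in>Exps. \<phi> (c p) * monomial p) \<Longrightarrow> x \<in> monomial_span"
  unfolding monomial_span_def by blast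

lemma span_add: assumes "x \<in> monomial_span" "y \<in> monomial_span" shows "x + y \<in> monomial_span"
proof -
  obtain c d where "x = (\<Sum>p\<in>Exps. \<phi> (c p) * monomial p)" "y = (\<Sum>p\<in>Exps. \<phi> (d p) * monomial p)"
    using assms unfolding monomial_span_def by auto
  then have "x + y = (\<Sum>p\<in>Exps. \<phi> (c p + d p) * monomial p)"
    by (simp add: sum.distrib distrib_right)
  then show ?thesis by (rule spanI)
qed

lemma span_scale: assumes "x \<in> monomial_span" shows "\<phi> d * x \<in> monomial_span"
proof -
  obtain c where "x = (\<Sum>p\<in>Exps. \<phi> (c p) * monomial p)" using assms unfolding monomial_span_def by auto
  then have "\<phi> d * x = (\<Sum>p\<in>Exps. \<phi> (d * c p) * monomial p)"
    by (simp add: sum_distrib_left mult.assoc)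
  then show ?thesis by (rule spanI)
qed

lemma span_sum: "finite F \<Longrightarrow> (\<And>i. i \<in> F \<Longrightarrow> f i \<in> monomial_span) \<Longrightarrow> sum f F \<in> monomial_span"
proof (induction F rule: finite_induct)
  case empty
  have "(0::'a) = (\<Sum>p\<in>Exps. \<phi> ((\<lambda>_. 0) p) * monomial p)" by simp
  then show ?case unfolding sum.empty by (rule spanI)
next
  case (insert x F) then show ?case by (simp add: span_add)
qed

lemma span_monomial: assumes r: "r \<in> Exps" shows "\<phi> d * monomial r \<in> monomial_span"
proof -
  have "(\<Sum>p\<in>Exps. \<phi> (if p = r then d else 0) * monomial p) = (\<Sum>p\<in>Exps. if p = r then \<phi> d * monomial r else 0)"
    by (rule sum.cong) auto
  also have "\<dots> = \<phi> d * monomial r" using r by simp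
  finally show ?thesis by (rule spanI[OF sym])
qed

lemma span_signed: assumes "x \<in> signed_monomials" shows "\<phi> d * x \<in> monomial_span"
proof -
  obtain A B where AB: "(A, B) \<in> Exps" and x: "x = monomial (A, B) \<or> x = - monomial (A, B)"
    using assms by (rule signed_cases) auto
  then show ?thesis using span_monomial[OF AB, of d] span_monomial[OF AB, of "- d"] by auto
qed

lemma span_mult:
  assumes y: "\<And>x. x \<in> signed_monomials \<Longrightarrow> y * x \<in> signed_monomials" and z: "z \<in> monomial_span"
  shows "y * z \<in> monomial_span"
proof -
  obtain c where zc: "z = (\<Sum>p\<in>Exps. \<phi> (c p) * monomial p)" using z unfolding monomial_span_def by auto
  have "y * z = (\<Sum>p\<in>Exps. \<phi> (c p) * (y * monomial p))"
    unfolding zc sum_distrib_left by (simp add: phi_left)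
  also have "\<dots> \<in> monomial_span" using y monomial_signed by (intro span_sum span_signed) auto
  finally show ?thesis .
qed

lemma span_s: assumes i: "i \<in> Idx" and z: "z \<in> monomial_span" shows "s i * z \<in> monomial_span"
proof -
  have uz: "u i * z \<in> monomial_span" and vz: "v i * z \<in> monomial_span"
    using z u_signed[OF i] v_signed[OF i] by (auto intro: span_mult)
  have uvz: "u i * (v i * z) \<in> monomial_span" using vz u_signed[OF i] by (auto intro: span_mult)
  have "s i * z = \<phi> (- 1 / (2 * q)) * (z + u i * z + v i * z + u i * (v i * z))"
    unfolding s_quat by (simp only: mult.assoc distrib_right mult_1_left)
  then show ?thesis using z uz vz uvz by (simp only: span_add span_scale)
qed

lemma G_span: "g \<in> G \<Longrightarrow> g \<in> monomial_span"
proof (induction rule: gen_group.induct)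
  case one
  have "1 = \<phi> 1 * monomial ({}, {})" by (simp add: monomial_def)
  then show ?case using span_monomial[of "({}, {})" 1] by simp
next
  case (mult g s') then show ?case using span_s by auto
next
  case (inv g s' t)
  obtain i where i: "i \<in> Idx" "s' = s i" using inv.hyps(2) by blast
  have "t = - (s i * s i)" using s_inverse_unique[OF i(1)] inv.hyps(3) i(2) by simp
  then have "t * g = \<phi> (-1) * (s i * (s i * g))" by (simp add: mult.assoc)
  then show ?case using span_s[OF i(1)] span_scale inv.IH by (simp only:)
qed

text \<open>Elements of \<open>Z\<close> commute with every \<open>u\<^sub>j, v\<^sub>j\<close>, so only monomials with even exponent sets
  survive in their expansion.\<close>
lemma Z_even_expansion:
  assumes z: "z \<in> Z"
  shows "\<exists>c. z = (\<Sum>p\<in>even_sets \<times> even_sets. \<phi> (c p) * monomial p)"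
proof -
  obtain c where c: "z = (\<Sum>p\<in>Exps. \<phi> (c p) * monomial p)"
    using G_span[OF Z_G[OF z]] unfolding monomial_span_def by auto
  define E where "E T = {p\<in>Exps. \<forall>j\<in>T. even (adj_count (snd p) j) \<and> even (adj_count (fst p) j)}" for T
  have filtered: "finite T \<Longrightarrow> T \<subseteq> Idx \<Longrightarrow> z = (\<Sum>p\<in>E T. \<phi> (c p) * monomial p)" for T
  proof (induction T rule: finite_induct)
    case empty then show ?case using c by (simp add: E_def)
  next
    case (insert j T)
    have j: "j \<in> Idx" and sub: "E T \<subseteq> Exps" using insert.prems by (auto simp: E_def)
    have fin: "finite (E T)" by (simp add: E_def)
    have IH: "z = (\<Sum>p\<in>E T. \<phi> (c p) * monomial p)" using insert by simp
    have "u j * monomial p = (if even (adj_count (snd p) j) then 1 else -1) * (monomial p * u j)"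
      if "p \<in> E T" for p using that sub u_monomial[OF j, of p] by (auto simp: minus_one_power_iff)
    then have z1: "z = (\<Sum>p\<in>{p\<in>E T. even (adj_count (snd p) j)}. \<phi> (c p) * monomial p)"
      by (rule commutant_filter[OF u_square[OF j] fin IH Z_commutes_generators(1)[OF z j]])
    have "v j * monomial p = (if even (adj_count (fst p) j) then 1 else -1) * (monomial p * v j)"
      if "p \<in> E T" for p using that sub v_monomial[OF j, of p] by (auto simp: minus_one_power_iff)
    then have z2: "z = (\<Sum>p\<in>{p\<in>{p\<in>E T. even (adj_count (snd p) j)}. even (adj_count (fst p) j)}.
        \<phi> (c p) * monomial p)"
      using fin by (intro commutant_filter[OF v_square[OF j] _ z1 Z_commutes_generators(2)[OF z j]]) auto
    have "{p\<in>{p\<in>E T. even (adj_count (snd p) j)}. even (adj_count (fst p) j)} = E (insert j T)"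
      unfolding E_def by auto
    then show ?case using z2 by simp
  qed
  moreover have "E Idx = even_sets \<times> even_sets" unfolding E_def even_sets_def by auto
  ultimately show ?thesis using filtered[of Idx] by auto
qed

section \<open>Eigenvalues of \<open>Z\<close> and finiteness\<close>

lemma s_six: assumes i: "i \<in> Idx" shows "s i ^ 6 = 1"
proof -
  have "s i ^ 6 = (s i * (s i * s i)) * (s i * (s i * s i))"
    by (simp add: eval_nat_numeral mult.assoc)
  then show ?thesis using s_cube[OF i] by simp
qed

text \<open>Every character of \<open>Z\<close> takes values in the roots of unity of order dividing
  \<open>6 [G : Z]\<close>: its transfer is a homomorphism on \<open>G\<close> killing the sixth powers of the generators.\<close>
lemma character_root_of_unity:
  fixes \<chi> :: "'a \<Rightarrow> complex"
  assumes \<chi>: "character \<chi>" and z: "z \<in> Z"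
  shows "\<chi> z ^ (card reps * 6) = 1"
proof -
  have gens: "transfer \<chi> x ^ 6 = 1" if x: "x \<in> s ` Idx" for x
  proof -
    obtain i where i: "i \<in> Idx" "x = s i" using x by blast
    have "s i \<in> G" using gen_group_gen i by blast
    then show ?thesis using transfer_power[OF \<chi>, of "s i" 6] s_six[OF i(1)] transfer_one[OF \<chi>] i(2)
      by simp
  qed
  have "transfer \<chi> z ^ 6 = 1"
    using gen_group_torsion[of "s ` Idx" "transfer \<chi>" 6] transfer_mult[OF \<chi>] transfer_one[OF \<chi>]
      gens Z_G[OF z] by blast
  then show ?thesis using transfer_central[OF z, of \<chi>] by (simp add: power_mult)
qed

text \<open>If \<open>1\<close> decomposes as a finite sum of common eigenvectors of \<open>Z\<close>, then \<open>Z\<close> is finite: each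
  \<open>z \<in> Z\<close> is determined by its eigenvalues, which are roots of unity of bounded order.\<close>
lemma finite_Z_from_eigenvectors:
  fixes J :: "'j set" and e :: "'j \<Rightarrow> 'a"
  assumes J: "finite J" and sum_one: "(\<Sum>j\<in>J. e j) = 1"
    and eigen: "\<And>j z. j \<in> J \<Longrightarrow> z \<in> Z \<Longrightarrow> \<exists>c. z * e j = \<phi> c * e j"
  shows "finite Z"
proof -
  define N where "N = card reps * 6"
  have "N > 0" unfolding N_def using card_reps_pos by simp
  then have roots: "finite {c::complex. c ^ N = 1}" by (intro finite_roots_unity) simp
  define \<kappa> where "\<kappa> z j = (if j \<in> J \<and> e j \<noteq> 0 then eigenvalue (e j) z else 1)" for z j
  have roots_mem: "\<kappa> z j \<in> {c. c ^ N = 1}" if z: "z \<in> Z" for z j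
  proof (cases "j \<in> J \<and> e j \<noteq> 0")
    case True
    have "character (eigenvalue (e j))"
      unfolding character_def using True eigen eigenvalue_mult eigenvalue_one by blast
    then show ?thesis using character_root_of_unity[OF _ z] True by (simp add: \<kappa>_def N_def)
  next
    case False then have "\<kappa> z j = 1" unfolding \<kappa>_def by (rule if_not_P)
    then show ?thesis by simp
  qed
  have "\<kappa> ` Z \<subseteq> {f. \<forall>j. (j \<in> J \<longrightarrow> f j \<in> {c. c ^ N = 1}) \<and> (j \<notin> J \<longrightarrow> f j = 1)}"
  proof -
    have "\<kappa> z j = 1" if "j \<notin> J" for z j using that by (simp add: \<kappa>_def)
    then show ?thesis using roots_mem by auto
  qed
  then have fin: "finite (\<kappa> ` Z)"
    by (rule finite_subset) (intro finite_set_of_finite_funs J roots)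
  have z_decomposed: "z = (\<Sum>j\<in>J. \<phi> (\<kappa> z j) * e j)" if z: "z \<in> Z" for z
  proof -
    have "z = (\<Sum>j\<in>J. z * e j)" using sum_one by (simp add: sum_distrib_left[symmetric])
    also have "\<dots> = (\<Sum>j\<in>J. \<phi> (\<kappa> z j) * e j)"
      using eigenvalue[OF eigen[OF _ z]] by (intro sum.cong) (auto simp: \<kappa>_def)
    finally show ?thesis .
  qed
  have "inj_on \<kappa> Z"
    by (rule inj_onI) (metis z_decomposed)
  then show ?thesis using fin finite_imageD by blast
qed

text \<open>Let \<open>X\<close> be the only possible nonempty even exponent set.  Then every element of \<open>Z\<close> is a
  combination of \<open>1, u\<^sub>X, v\<^sub>X, u\<^sub>X v\<^sub>X\<close>, so it acts by a scalar on every common eigenvector of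
  \<open>u\<^sub>X\<close> and \<open>v\<^sub>X\<close>.\<close>
lemma Z_scalar_on_eigenvector:
  assumes evens: "even_sets \<subseteq> {{}, X}" and z: "z \<in> Z"
    and U: "cprod u X * e = \<phi> a * e" and V: "cprod v X * e = \<phi> b * e"
  shows "\<exists>c. z * e = \<phi> c * e"
proof -
  have scalar: "(\<exists>d. cprod u A * e = \<phi> d * e) \<and> (\<exists>d. cprod v A * e = \<phi> d * e)"
    if "A \<in> even_sets" for A
  proof -
    have "A = {} \<or> A = X" using that evens by auto
    then show ?thesis
    proof
      assume "A = {}" then show ?thesis by (auto intro!: exI[of _ 1])
    next
      assume "A = X" then show ?thesis using U V by blast
    qed
  qed
  have monomial_scalar: "\<exists>d. monomial p * e = \<phi> d * e" if p: "p \<in> even_sets \<times> even_sets" for p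
  proof -
    have "fst p \<in> even_sets" "snd p \<in> even_sets" using p by auto
    then obtain d1 d2 where d1: "cprod u (fst p) * e = \<phi> d1 * e" and d2: "cprod v (snd p) * e = \<phi> d2 * e"
      using conjunct1[OF scalar[of "fst p"]] conjunct2[OF scalar[of "snd p"]] by auto
    have "monomial p * e = \<phi> (d2 * d1) * e"
      by (simp only: monomial_def mult.assoc d2 phi_left[of "cprod u (fst p)"] d1 phi_mult)
    then show ?thesis by blast
  qed
  obtain c where zc: "z = (\<Sum>p\<in>even_sets \<times> even_sets. \<phi> (c p) * monomial p)"
    using Z_even_expansion[OF z] by blast
  have "finite even_sets" by (rule finite_subset[OF evens]) simp
  then have "finite (even_sets \<times> even_sets)" by simp
  from scalar_action_sum[OF this monomial_scalar] show ?thesis unfolding zc .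
qed

lemma even_set_involutions:
  assumes X: "X \<in> even_sets"
  obtains l1 l2 where "l1 \<noteq> 0" "l2 \<noteq> 0"
    "\<phi> l1 * cprod u X * (\<phi> l1 * cprod u X) = 1" "\<phi> l2 * cprod v X * (\<phi> l2 * cprod v X) = 1"
    "\<phi> l1 * cprod u X * (\<phi> l2 * cprod v X) = \<phi> l2 * cprod v X * (\<phi> l1 * cprod u X)"
proof -
  have XI: "X \<subseteq> Idx" and fX: "finite X" and evX: "\<And>j. j \<in> Idx \<Longrightarrow> even (adj_count X j)"
    using X finite_subset[of X Idx] unfolding even_sets_def by auto
  let ?U = "cprod u X" and ?V = "cprod v X"
  have UV: "?U * ?V = ?V * ?U"
  proof (rule cprod_commute[OF commuting_v fX XI])
    fix j assume "j \<in> X"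
    then show "?U * v j = v j * ?U" using v_cprod_u[of j X] XI evX by auto
  qed
  have "?U * ?U = (-1) ^ card X"
    by (rule cprod_square[OF commuting_u fX XI]) (use XI u_square in blast)
  moreover have "?V * ?V = (-1) ^ card X"
    by (rule cprod_square[OF commuting_v fX XI]) (use XI v_square in blast)
  ultimately obtain l1 l2 where l1: "l1 \<noteq> 0" "\<phi> l1 * ?U * (\<phi> l1 * ?U) = 1"
    and l2: "l2 \<noteq> 0" "\<phi> l2 * ?V * (\<phi> l2 * ?V) = 1"
    using rescaled_involution by meson
  moreover have "\<phi> l1 * ?U * (\<phi> l2 * ?V) = \<phi> l2 * ?V * (\<phi> l1 * ?U)"
    by (simp only: mult.assoc phi_left[of ?U] phi_left[of ?V] UV)
      (simp only: mult.assoc[symmetric] phi_mult[symmetric] mult.commute[of l1 l2])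
  ultimately show ?thesis using that by blast
qed

lemma Z_eigenvectors:
  "\<exists>e :: complex \<times> complex \<Rightarrow> 'a. (\<Sum>ab\<in>{1,-1}\<times>{1,-1}. e ab) = 1 \<and>
     (\<forall>ab\<in>{1,-1}\<times>{1,-1}. \<forall>z\<in>Z. \<exists>c. z * e ab = \<phi> c * e ab)"
proof -
  obtain X where X: "X \<in> even_sets" and evens: "even_sets \<subseteq> {{}, X}"
    using even_sets_pair by blast
  obtain l1 l2 where l: "l1 \<noteq> 0" "l2 \<noteq> 0"
    and w1: "\<phi> l1 * cprod u X * (\<phi> l1 * cprod u X) = 1" and w2: "\<phi> l2 * cprod v X * (\<phi> l2 * cprod v X) = 1"
    and w12: "\<phi> l1 * cprod u X * (\<phi> l2 * cprod v X) = \<phi> l2 * cprod v X * (\<phi> l1 * cprod u X)"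
    using even_set_involutions[OF X] by blast
  define e where "e = joint_eigen (\<phi> l1 * cprod u X) (\<phi> l2 * cprod v X)"
  have "\<forall>z\<in>Z. \<exists>c. z * e ab = \<phi> c * e ab" if ab: "ab \<in> {1,-1}\<times>{1,-1}" for ab
  proof
    fix z assume z: "z \<in> Z"
    note eig = joint_eigen_eigen[OF w1 w2 w12 ab, folded e_def]
    show "\<exists>c. z * e ab = \<phi> c * e ab"
      by (rule Z_scalar_on_eigenvector[OF evens z rescaled_eigen[OF l(1) eig(1)] rescaled_eigen[OF l(2) eig(2)]])
  qed
  moreover have "(\<Sum>ab\<in>{1,-1}\<times>{1,-1}. e ab) = 1" unfolding e_def by (rule joint_eigen_sum)
  ultimately show ?thesis by blast
qed

lemma finite_G: "finite G"
proof -
  obtain e :: "complex \<times> complex \<Rightarrow> 'a" where "(\<Sum>ab\<in>{1,-1}\<times>{1,-1}. e ab) = 1" "\<forall>ab\<in>{1,-1}\<times>{1,-1}. \<forall>z\<in>Z. \<exists>c. z * e ab = \<phi> c * e ab"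
    using Z_eigenvectors by blast
  then have "finite Z" by (intro finite_Z_from_eigenvectors[of "{1,-1}\<times>{1,-1}" e]) auto
  then show ?thesis by (rule finite_if_finite_Z)
qed

end

text \<open>For \<open>q = exp (2\<pi>i/6)\<close> we have \<open>q\<^sup>3 = -1\<close>, so the elements \<open>s\<^sub>i\<close> are units and generate a
  finite group.\<close>
theorem lemma3p3:
  fixes n :: nat and \<phi> :: "complex \<Rightarrow> 'a::ring_1" and u v :: "nat \<Rightarrow> 'a" and q :: complex
  assumes "n \<ge> 2"
    and "q = exp (2 * pi * \<i> / 6)"
    and "complex_alg_emb \<phi>"
    and "Q_relations n u v"
  shows "(\<forall>i\<in>{1..<n}. \<exists>t. t * s_elt \<phi> q u v i = 1 \<and> s_elt \<phi> q u v i * t = 1)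
         \<and> finite (gen_group (s_elt \<phi> q u v ` {1..<n}))"
proof -
  have "q ^ 3 = exp (of_nat 3 * (2 * pi * \<i> / 6))"
    unfolding assms(2) by (rule exp_of_nat_mult[symmetric])
  also have "\<dots> = -1" by (simp add: exp_pi_i')
  finally have "q ^ 3 = -1" .
  then interpret Q_algebra \<phi> n u v q
    using assms(3,4) by unfold_locales
  have "s_elt \<phi> q u v = s" by (rule ext) (simp add: s_def)
  moreover have "\<forall>i\<in>{1..<n}. \<exists>t. t * s i = 1 \<and> s i * t = 1" using s_unit by blast
  ultimately show ?thesis using finite_G by simp
qed

end
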